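(* For $n\ge 1$ and $1\le k\le n$, the number of parking functions $\pi\in\mathrm{PF}_n$ with $\pi_1=k$ equals $$\sum_{s=0}^{n-k}\binom{n-1}{s}(s+1)^{s-1}(n-s)^{n-s-2}.$$
   Context: A parking function of length $n$ is a sequence $(\pi_1,\dots,\pi_n)$ with $1\le\pi_i\le n$ such that $\#\{t:\pi_t\le i\}\ge i$ for all $1\le i\le n$; $\mathrm{PF}_n$ denotes the set of these. (Here $0^{-1}$ does not occur; for $s=n-1$ the factor $(n-s)^{n-s-2}=1^{-1}=1$.) *)

theory Defs
  imports Complex_Main
begin

text \<open>Parking functions of length n, as lists (\<pi>_1,...,\<pi>_n) with \<pi>_t = xs ! (t-1).\<close>
definition parking_functions :: "nat \<Rightarrow> nat list set" where
  "parking_functions n =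
     {xs. length xs = n \<and> (\<forall>t<n. 1 \<le> xs ! t \<and> xs ! t \<le> n) \<and>
          (\<forall>i\<in>{1..n}. card {t. t < n \<and> xs ! t \<le> i} \<ge> i)}"

end

theory Submission
  imports Defs "HOL-Library.FuncSet"
begin

text \<open>
  Parking functions \<open>f\<close> are taken on an arbitrary finite index set \<open>I\<close> of size \<open>n\<close>, so that
  they can be split along subsets of \<open>I\<close>.
  By Pollak's argument exactly one of the \<open>n + 1\<close> cyclic shifts modulo \<open>n + 1\<close> of any
  \<open>f : I \<rightarrow> {1..n+1}\<close> is a parking function, so there are \<open>(n + 1)^(n - 1)\<close> of them.
  A parking function with \<open>f t\<^sub>0 = k\<close> that takes values \<open>\<le> k\<close> exactly \<open>k\<close> times splits into a
  parking function on the \<open>k - 1\<close> points with values below \<open>k\<close> and a parking function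
  (after subtracting \<open>k\<close>) on the \<open>n - k\<close> points with values above \<open>k\<close>; there are
  \<open>C(n-1,k-1) k^(k-2) (n-k+1)^(n-k-1)\<close> of these. All other parking functions with
  \<open>f t\<^sub>0 = k\<close> correspond, by raising \<open>f t\<^sub>0\<close> to \<open>k + 1\<close>, to the parking functions with
  \<open>f t\<^sub>0 = k + 1\<close>. Unrolling this recursion over \<open>m = k, \<dots>, n\<close> and substituting \<open>s = n - m\<close>
  gives the formula.
\<close>

definition parking :: "'a set \<Rightarrow> ('a \<Rightarrow> nat) \<Rightarrow> bool" where
  "parking I f \<longleftrightarrow> (\<forall>i\<in>{1..card I}. i \<le> card {t\<in>I. f t \<le> i})"

definition parking_funs :: "'a set \<Rightarrow> ('a \<Rightarrow> nat) set" where
  "parking_funs I = {f \<in> I \<rightarrow>\<^sub>E {1..card I}. parking I f}"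

lemma finite_parking_funs: "finite I \<Longrightarrow> finite (parking_funs I)"
  unfolding parking_funs_def by (rule finite_subset[of _ "I \<rightarrow>\<^sub>E {1..card I}"]) (auto intro: finite_PiE)

lemma parking_funs_bounds: "f \<in> parking_funs I \<Longrightarrow> t \<in> I \<Longrightarrow> 1 \<le> f t \<and> f t \<le> card I"
  unfolding parking_funs_def by (auto dest: PiE_mem)

lemma parking_funs_le_card:
  "f \<in> parking_funs I \<Longrightarrow> 1 \<le> i \<Longrightarrow> i \<le> card I \<Longrightarrow> i \<le> card {t\<in>I. f t \<le> i}"
  unfolding parking_funs_def parking_def by simp

lemma parking_funs_eq_Suc_range:
  assumes "finite I"
  shows "parking_funs I = {f \<in> I \<rightarrow>\<^sub>E {1..Suc (card I)}. parking I f}"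
proof (intro set_eqI iffI)
  fix f assume "f \<in> parking_funs I"
  then show "f \<in> {f \<in> I \<rightarrow>\<^sub>E {1..Suc (card I)}. parking I f}"
    unfolding parking_funs_def by (auto simp: PiE_def Pi_def)
next
  fix f assume f: "f \<in> {f \<in> I \<rightarrow>\<^sub>E {1..Suc (card I)}. parking I f}"
  have "\<forall>t\<in>I. f t \<le> card I"
  proof (cases "card I = 0")
    case False
    then have "card I \<le> card {t\<in>I. f t \<le> card I}" using f unfolding parking_def by auto
    then have "{t\<in>I. f t \<le> card I} = I" using assms by (intro card_seteq) auto
    then show ?thesis by blast
  qed (use assms in simp)
  then show "f \<in> parking_funs I" using f unfolding parking_funs_def by (auto simp: PiE_def Pi_def)
qed

lemma card_less_eq_sum_card_eq:
  fixes i :: nat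
  assumes "finite I"
  shows "card {t\<in>I. g t < i} = (\<Sum>v<i. card {t\<in>I. g t = v})"
proof (induction i)
  case (Suc i)
  have "{t\<in>I. g t < Suc i} = {t\<in>I. g t < i} \<union> {t\<in>I. g t = i}" by auto
  moreover have "card ({t\<in>I. g t < i} \<union> {t\<in>I. g t = i}) = card {t\<in>I. g t < i} + card {t\<in>I. g t = i}"
    using assms by (intro card_Un_disjoint) auto
  ultimately show ?case using Suc by simp
qed simp

subsection \<open>Pollak's cyclic argument\<close>

lemma cycle_lemma:
  fixes T :: "nat \<Rightarrow> int"
  assumes M: "0 < M" and period: "\<And>j. T (j + M) = T j - 1"
  shows "\<exists>!d. d < M \<and> (\<forall>i\<in>{1..<M}. T d \<le> T (d + i))"
proof -
  define \<mu> where "\<mu> = Min (T ` {..<M})"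
  have \<mu>_le: "\<mu> \<le> T j" if "j < M" for j unfolding \<mu>_def using that by simp
  have "\<mu> \<in> T ` {..<M}" unfolding \<mu>_def using M by (intro Min_in) auto
  then have ex: "\<exists>j. j < M \<and> T j = \<mu>" by auto
  define d where "d = (LEAST j. j < M \<and> T j = \<mu>)"
  have d: "d < M" "T d = \<mu>" using LeastI_ex[OF ex] unfolding d_def by auto
  have before_d: "\<mu> < T j" if "j < d" for j
    using not_less_Least[OF that[unfolded d_def]] \<mu>_le[of j] that d by fastforce
  have d_good: "T d \<le> T (d + i)" if "i \<in> {1..<M}" for i
  proof (cases "d + i < M")
    case False
    then have "d + i = (d + i - M) + M" "d + i - M < d" using that by auto
    then show ?thesis using before_d[of "d + i - M"] period[of "d + i - M"] d by simp
  qed (use \<mu>_le d in simp)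
  show ?thesis
  proof (rule ex1I[of _ d])
    fix d' assume d': "d' < M \<and> (\<forall>i\<in>{1..<M}. T d' \<le> T (d' + i))"
    show "d' = d"
    proof (rule ccontr)
      assume "d' \<noteq> d"
      then consider "d' < d" | "d < d'" by linarith
      then show False
      proof cases
        case 1
        then have "T d' \<le> T (d' + (d - d'))" using d' d by (intro d'[THEN conjunct2, rule_format]) auto
        then show False using before_d[OF 1] d 1 by simp
      next
        case 2
        then have "T d' \<le> T (d' + (d + M - d'))" using d' d by (intro d'[THEN conjunct2, rule_format]) auto
        then show False using period[of d] d \<mu>_le[of d'] d' 2 by simp
      qed
    qed
  qed (use d d_good in auto)
qed

definition shift_mod :: "nat \<Rightarrow> 'a set \<Rightarrow> nat \<Rightarrow> ('a \<Rightarrow> nat) \<Rightarrow> 'a \<Rightarrow> nat" where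
  "shift_mod M I c f = restrict (\<lambda>t. (f t + c - 1) mod M + 1) I"

lemma shift_mod_PiE: "0 < M \<Longrightarrow> shift_mod M I c f \<in> I \<rightarrow>\<^sub>E {1..M}"
  unfolding shift_mod_def by (auto simp: Suc_le_eq)

lemma shift_mod_shift_mod:
  assumes f: "f \<in> I \<rightarrow>\<^sub>E {1..M}" and "a + b = M"
  shows "shift_mod M I a (shift_mod M I b f) = f"
proof
  fix t
  show "shift_mod M I a (shift_mod M I b f) t = f t"
  proof (cases "t \<in> I")
    case True
    define x where "x = f t - 1"
    have x: "f t = x + 1" "x < M" using PiE_mem[OF f True] by (auto simp: x_def)
    have "((x + b) mod M + a) mod M = (x + b + a) mod M" by (simp add: mod_add_left_eq)
    also have "x + b + a = x + M" using \<open>a + b = M\<close> by simp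
    also have "(x + M) mod M = x" using \<open>x < M\<close> by simp
    finally have "((x + b) mod M + a) mod M = x" .
    then show ?thesis using True x unfolding shift_mod_def by simp
  qed (simp add: shift_mod_def PiE_arb[OF f])
qed

lemma mod_add_eq_iff:
  fixes x v c M :: nat
  assumes "x < M" "v < M" "c \<le> M"
  shows "(x + c) mod M = v \<longleftrightarrow> x = (v + (M - c)) mod M"
proof
  assume "(x + c) mod M = v"
  then have "(v + (M - c)) mod M = (x + c + (M - c)) mod M" by (metis mod_add_left_eq)
  then show "x = (v + (M - c)) mod M" using assms by simp
next
  assume "x = (v + (M - c)) mod M"
  then have "(x + c) mod M = (v + (M - c) + c) mod M" by (metis mod_add_left_eq)
  then show "(x + c) mod M = v" using assms by simp
qed

definition occ :: "nat \<Rightarrow> 'a set \<Rightarrow> ('a \<Rightarrow> nat) \<Rightarrow> nat \<Rightarrow> nat" where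
  "occ M I f v = card {t\<in>I. f t = v mod M + 1}"

text \<open>
  Read from position \<open>M - c\<close>, the walk records \<open>card {t\<in>I. shift_mod M I c f t \<le> i} - i\<close>,
  so the shift by \<open>c\<close> parks iff the walk never drops below its starting value within one period.
\<close>
definition walk :: "nat \<Rightarrow> 'a set \<Rightarrow> ('a \<Rightarrow> nat) \<Rightarrow> nat \<Rightarrow> int" where
  "walk M I f j = (\<Sum>v<j. int (occ M I f v) - 1)"

lemma card_shift_mod_le:
  assumes I: "finite I" and f: "f \<in> I \<rightarrow>\<^sub>E {1..M}" and "c \<le> M" "i \<le> M"
  shows "card {t\<in>I. shift_mod M I c f t \<le> i} = (\<Sum>v<i. occ M I f (v + (M - c)))"
proof -
  have "{t\<in>I. shift_mod M I c f t \<le> i} = {t\<in>I. (f t - 1 + c) mod M < i}"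
    using f by (force simp: shift_mod_def)
  then have "card {t\<in>I. shift_mod M I c f t \<le> i} = (\<Sum>v<i. card {t\<in>I. (f t - 1 + c) mod M = v})"
    using card_less_eq_sum_card_eq[OF I] by simp
  also have "\<dots> = (\<Sum>v<i. occ M I f (v + (M - c)))"
  proof (rule sum.cong)
    fix v assume "v \<in> {..<i}"
    then have "(f t - 1 + c) mod M = v \<longleftrightarrow> f t = (v + (M - c)) mod M + 1" if "t \<in> I" for t
      using mod_add_eq_iff[of "f t - 1" M v c] PiE_mem[OF f that] assms by auto
    then show "card {t\<in>I. (f t - 1 + c) mod M = v} = occ M I f (v + (M - c))"
      unfolding occ_def by (metis (lifting))
  qed simp
  finally show ?thesis .
qed

lemma walk_add_period:
  assumes I: "finite I" and f: "f \<in> I \<rightarrow>\<^sub>E {1..M}" and M: "M = Suc (card I)"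
  shows "walk M I f (j + M) = walk M I f j - 1"
proof (induction j)
  case 0
  have "{t\<in>I. f t - 1 < M} = I" using f by force
  then have "card I = (\<Sum>v<M. card {t\<in>I. f t - 1 = v})"
    using card_less_eq_sum_card_eq[OF I, of "\<lambda>t. f t - 1" M] by simp
  also have "\<dots> = (\<Sum>v<M. occ M I f v)"
  proof (rule sum.cong)
    fix v assume "v \<in> {..<M}"
    then have "{t\<in>I. f t - 1 = v} = {t\<in>I. f t = v mod M + 1}" using f by force
    then show "card {t\<in>I. f t - 1 = v} = occ M I f v" unfolding occ_def by simp
  qed simp
  finally have "walk M I f M = int (card I) - int M"
    unfolding walk_def by (simp add: sum_subtractf)
  then show ?case using M by (simp add: walk_def)
next
  case (Suc j)
  then show ?case by (simp add: walk_def occ_def)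
qed

lemma parking_shift_mod_iff:
  assumes I: "finite I" and f: "f \<in> I \<rightarrow>\<^sub>E {1..M}" and M: "M = Suc (card I)" and "c \<le> M"
  shows "parking I (shift_mod M I c f) \<longleftrightarrow>
    (\<forall>i\<in>{1..<M}. walk M I f (M - c) \<le> walk M I f (M - c + i))"
proof -
  have "walk M I f (M - c + i) = walk M I f (M - c)
      + int (card {t\<in>I. shift_mod M I c f t \<le> i}) - int i" if "i \<in> {1..<M}" for i
  proof -
    have "walk M I f (M - c + i) = walk M I f (M - c) + (\<Sum>v<i. int (occ M I f (v + (M - c))) - 1)"
      unfolding walk_def by (induction i) (auto simp: add.commute)
    then show ?thesis using card_shift_mod_le[OF I f \<open>c \<le> M\<close>, of i] that
      by (simp add: sum_subtractf)
  qed
  moreover have "{1..card I} = {1..<M}" using M by auto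
  ultimately show ?thesis unfolding parking_def by auto
qed

lemma ex1_parking_shift_mod:
  assumes I: "finite I" and f: "f \<in> I \<rightarrow>\<^sub>E {1..M}" and M: "M = Suc (card I)"
  shows "\<exists>!c. c < M \<and> parking I (shift_mod M I c f)"
proof -
  define G where "G d \<longleftrightarrow> (\<forall>i\<in>{1..<M}. walk M I f d \<le> walk M I f (d + i))" for d
  have period: "walk M I f (j + M) = walk M I f j - 1" for j using walk_add_period[OF I f M] .
  have "\<exists>!d. d < M \<and> G d" unfolding G_def using cycle_lemma[of M "walk M I f"] period M by simp
  then obtain d where d: "d < M" "G d" and d_unique: "\<And>d'. d' < M \<Longrightarrow> G d' \<Longrightarrow> d' = d"
    by blast
  \<comment> \<open>the shift by \<open>c\<close> reads the walk from \<open>\<sigma> c\<close>, an involution of \<open>{..<M}\<close>\<close>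
  define \<sigma> where "\<sigma> c = (if c = 0 then 0 else M - c)" for c
  have \<sigma>: "\<sigma> c < M" "\<sigma> (\<sigma> c) = c" if "c < M" for c
    using that M by (auto simp: \<sigma>_def)
  have "walk M I f M \<le> walk M I f (M + i) \<longleftrightarrow> walk M I f 0 \<le> walk M I f i" for i
    using period[of i] period[of 0] by (simp add: add.commute, linarith)
  then have "G M = G 0" unfolding G_def by simp
  then have "G (M - c) = G (\<sigma> c)" for c by (simp add: \<sigma>_def)
  moreover have "parking I (shift_mod M I c f) \<longleftrightarrow> G (M - c)" if "c < M" for c
    using parking_shift_mod_iff[OF I f M, of c] that by (simp add: G_def)
  ultimately have parks: "parking I (shift_mod M I c f) \<longleftrightarrow> G (\<sigma> c)" if "c < M" for c
    using that by simp
  show ?thesis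
  proof (rule ex1I[of _ "\<sigma> d"])
    show "\<sigma> d < M \<and> parking I (shift_mod M I (\<sigma> d) f)" using \<sigma> d parks by simp
  next
    fix c assume c: "c < M \<and> parking I (shift_mod M I c f)"
    then have "G (\<sigma> c)" using parks by blast
    then have "\<sigma> c = d" using d_unique \<sigma> c by blast
    then show "c = \<sigma> d" using \<sigma> c by metis
  qed
qed

theorem card_parking_funs:
  assumes I: "finite I"
  shows "card (parking_funs I) = Suc (card I) ^ (card I - 1)"
proof -
  define M where "M = Suc (card I)"
  define U where "U = I \<rightarrow>\<^sub>E {1..M}"
  have finU: "finite U" unfolding U_def using I by (intro finite_PiE) auto
  have shift_U: "shift_mod M I c g \<in> U" for c g unfolding U_def M_def by (rule shift_mod_PiE) simp
  have shift_inverse: "shift_mod M I a (shift_mod M I b g) = g" if "g \<in> U" "a + b = M" for a b g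
    using that unfolding U_def by (rule shift_mod_shift_mod)
  have "card {f\<in>U. parking I (shift_mod M I c f)} = card (parking_funs I)" if "c < M" for c
  proof -
    have "bij_betw (shift_mod M I c) {f\<in>U. parking I (shift_mod M I c f)} {g\<in>U. parking I g}"
      by (rule bij_betw_byWitness[where f'="shift_mod M I (M - c)"])
        (use that shift_U shift_inverse in auto)
    then show ?thesis using parking_funs_eq_Suc_range[OF I] by (simp add: bij_betw_same_card U_def M_def)
  qed
  then have "(\<Sum>c<M. card {f\<in>U. parking I (shift_mod M I c f)}) = M * card (parking_funs I)"
    by simp
  moreover have "card {c\<in>{..<M}. parking I (shift_mod M I c f)} = 1" if f: "f \<in> U" for f
  proof -
    obtain c where "c < M \<and> parking I (shift_mod M I c f)"
      and "\<forall>c'. c' < M \<and> parking I (shift_mod M I c' f) \<longrightarrow> c' = c"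
      using ex1_parking_shift_mod[OF I f[unfolded U_def] M_def] by (rule ex1E)
    then have "{c\<in>{..<M}. parking I (shift_mod M I c f)} = {c}" by blast
    then show ?thesis by simp
  qed
  then have "(\<Sum>c<M. card {f\<in>U. parking I (shift_mod M I c f)}) = 1 * card U"
    using finU by (intro sum_multicount) auto
  moreover have "card U = M ^ card I" unfolding U_def using I by (simp add: card_PiE)
  ultimately have count: "card (parking_funs I) * M = M ^ card I" by simp
  show ?thesis
  proof (cases "card I")
    case (Suc m)
    then have "card (parking_funs I) * M = M ^ m * M" using count by (simp add: mult.commute)
    then show ?thesis using Suc unfolding mult_cancel2 M_def by simp
  qed (use count M_def in simp)
qed

subsection \<open>Splitting at a breakpoint\<close>

definition glue :: "'a set \<Rightarrow> 'a \<Rightarrow> nat \<Rightarrow> 'a set \<Rightarrow> ('a \<Rightarrow> nat) \<Rightarrow> ('a \<Rightarrow> nat) \<Rightarrow> 'a \<Rightarrow> nat" where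
  "glue I t0 k L g h = restrict (\<lambda>t. if t = t0 then k else if t \<in> L then g t else h t + k) I"

definition split_at :: "'a set \<Rightarrow> 'a \<Rightarrow> nat \<Rightarrow> ('a \<Rightarrow> nat) \<Rightarrow> 'a set \<times> ('a \<Rightarrow> nat) \<times> ('a \<Rightarrow> nat)" where
  "split_at I t0 k f = ({t\<in>I. f t < k}, restrict f {t\<in>I. f t < k},
     restrict (\<lambda>t. f t - k) (I - insert t0 {t\<in>I. f t < k}))"

lemma card_Diff_insert_subset:
  assumes "finite I" "t0 \<in> I" "L \<subseteq> I - {t0}" "card L = k - 1" "1 \<le> k"
  shows "card (insert t0 L) = k" and "card (I - insert t0 L) = card I - k"
proof -
  have "finite L" "t0 \<notin> L" using assms finite_subset by auto
  then show "card (insert t0 L) = k" using assms by simp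
  moreover have "insert t0 L \<subseteq> I" using assms by auto
  ultimately show "card (I - insert t0 L) = card I - k"
    using \<open>finite L\<close> by (simp add: card_Diff_subset)
qed

lemma card_glue_le:
  assumes I: "finite I" "t0 \<in> I" and L: "L \<subseteq> I - {t0}" "card L = k - 1" and "1 \<le> k"
    and g: "\<forall>t\<in>L. g t < k"
  shows "card {t\<in>I. glue I t0 k L g h t \<le> i} =
    (if i < k then card {t\<in>L. g t \<le> i} else k + card {t\<in>I - insert t0 L. h t \<le> i - k})"
proof (cases "i < k")
  case True
  have "{t\<in>I. glue I t0 k L g h t \<le> i} = {t\<in>L. g t \<le> i}"
    using True L by (auto simp: glue_def)
  then show ?thesis using True by simp
next
  case False
  have "{t\<in>I. glue I t0 k L g h t \<le> i} = insert t0 L \<union> {t\<in>I - insert t0 L. h t \<le> i - k}"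
    using False I L g by (auto simp: glue_def)
  moreover have "card (insert t0 L \<union> {t\<in>I - insert t0 L. h t \<le> i - k})
      = card (insert t0 L) + card {t\<in>I - insert t0 L. h t \<le> i - k}"
    using I L finite_subset by (intro card_Un_disjoint) auto
  ultimately show ?thesis
    using False card_Diff_insert_subset(1)[OF I L \<open>1 \<le> k\<close>] by simp
qed

lemma glue_in_parking_funs:
  assumes I: "finite I" "t0 \<in> I" and k: "1 \<le> k" "k \<le> card I"
    and L: "L \<subseteq> I - {t0}" "card L = k - 1"
    and g: "g \<in> parking_funs L" and h: "h \<in> parking_funs (I - insert t0 L)"
  shows "glue I t0 k L g h \<in> parking_funs I"
proof -
  define R where "R = I - insert t0 L"
  have card_R: "card R = card I - k" unfolding R_def using card_Diff_insert_subset(2)[OF I L k(1)] .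
  have g_val: "1 \<le> g t \<and> g t < k" if "t \<in> L" for t
    using parking_funs_bounds[OF g that] L(2) k(1) by linarith
  have h_val: "1 \<le> h t \<and> h t \<le> card I - k" if "t \<in> R" for t
    using parking_funs_bounds[OF h] that card_R unfolding R_def by simp
  note count = card_glue_le[OF I L k(1), of g h]
  have "glue I t0 k L g h \<in> I \<rightarrow>\<^sub>E {1..card I}"
  proof (rule PiE_I)
    fix t assume "t \<in> I"
    then show "glue I t0 k L g h t \<in> {1..card I}"
      using g_val[of t] h_val[of t] k by (cases "t = t0 \<or> t \<in> L") (auto simp: glue_def R_def)
  qed (simp add: glue_def)
  moreover have "i \<le> card {t\<in>I. glue I t0 k L g h t \<le> i}" if i: "i \<in> {1..card I}" for i
  proof (cases "i < k")
    case True
    then have "i \<le> card {t\<in>L. g t \<le> i}" using parking_funs_le_card[OF g, of i] i L by simp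
    then show ?thesis using count g_val True by simp
  next
    case False
    have "i - k \<le> card {t\<in>R. h t \<le> i - k}"
      using parking_funs_le_card[OF h, of "i - k"] i card_R False unfolding R_def
      by (cases "i = k") auto
    then show ?thesis using count g_val False unfolding R_def by simp
  qed
  ultimately show ?thesis unfolding parking_funs_def parking_def by blast
qed

lemma card_glue_le_eq:
  assumes I: "finite I" "t0 \<in> I" and "1 \<le> k" and L: "L \<subseteq> I - {t0}" "card L = k - 1"
    and g: "g \<in> parking_funs L" and h: "h \<in> parking_funs (I - insert t0 L)"
  shows "card {t\<in>I. glue I t0 k L g h t \<le> k} = k"
proof -
  have "\<forall>t\<in>L. g t < k" using parking_funs_bounds[OF g] L(2) \<open>1 \<le> k\<close> by fastforce
  then have "card {t\<in>I. glue I t0 k L g h t \<le> k} = k + card {t\<in>I - insert t0 L. h t \<le> k - k}"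
    using card_glue_le[OF I L \<open>1 \<le> k\<close>] by simp
  also have "{t\<in>I - insert t0 L. h t \<le> k - k} = {}" using parking_funs_bounds[OF h] by fastforce
  finally show ?thesis by simp
qed

lemma split_at_glue:
  assumes L: "L \<subseteq> I - {t0}" "card L = k - 1" and "1 \<le> k"
    and g: "g \<in> parking_funs L" and h: "h \<in> parking_funs (I - insert t0 L)"
  shows "split_at I t0 k (glue I t0 k L g h) = (L, g, h)"
proof -
  have g_PiE: "g \<in> L \<rightarrow>\<^sub>E {1..card L}" and h_PiE: "h \<in> (I - insert t0 L) \<rightarrow>\<^sub>E {1..card (I - insert t0 L)}"
    using g h unfolding parking_funs_def by simp_all
  have g_less: "g t < k" if "t \<in> L" for t using parking_funs_bounds[OF g that] L(2) \<open>1 \<le> k\<close> by linarith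
  have "{t\<in>I. glue I t0 k L g h t < k} = L" using L g_less by (auto simp: glue_def)
  moreover have "restrict (glue I t0 k L g h) L = restrict g L"
    using L by (intro restrict_ext) (auto simp: glue_def)
  moreover have "restrict (\<lambda>t. glue I t0 k L g h t - k) (I - insert t0 L) = restrict h (I - insert t0 L)"
    by (intro restrict_ext) (auto simp: glue_def)
  ultimately show ?thesis
    unfolding split_at_def using PiE_restrict[OF g_PiE] PiE_restrict[OF h_PiE] by simp
qed

lemma breakpoint_lower_part:
  assumes I: "finite I" "t0 \<in> I" and f: "f \<in> parking_funs I" and "f t0 = k" "1 \<le> k"
    and brk: "card {t\<in>I. f t \<le> k} = k"
  shows "{t\<in>I. f t < k} \<subseteq> I - {t0}" and "card {t\<in>I. f t < k} = k - 1"
    and "{t\<in>I. f t \<le> k} = insert t0 {t\<in>I. f t < k}"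
proof -
  define L where "L = {t\<in>I. f t < k}"
  show L: "L \<subseteq> I - {t0}" unfolding L_def using \<open>f t0 = k\<close> by auto
  have "finite L" using I L finite_subset by blast
  have "k \<le> card I" using parking_funs_bounds[OF f I(2)] \<open>f t0 = k\<close> by simp
  have card_insert: "card (insert t0 L) = Suc (card L)"
    using \<open>finite L\<close> L by (subst card_insert_disjoint) auto
  have "k - 1 \<le> card L"
  proof (cases "k = 1")
    case False
    then have "k - 1 \<le> card {t\<in>I. f t \<le> k - 1}"
      using parking_funs_le_card[OF f, of "k - 1"] \<open>k \<le> card I\<close> \<open>1 \<le> k\<close> by simp
    moreover have "{t\<in>I. f t \<le> k - 1} = L" unfolding L_def using \<open>1 \<le> k\<close> by auto
    ultimately show ?thesis by simp
  qed simp
  then have "card {t\<in>I. f t \<le> k} \<le> card (insert t0 L)"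
    using brk card_insert by simp
  moreover have "insert t0 L \<subseteq> {t\<in>I. f t \<le> k}" unfolding L_def using I \<open>f t0 = k\<close> by auto
  ultimately show eq: "{t\<in>I. f t \<le> k} = insert t0 L"
    using I by (intro card_seteq[symmetric]) auto
  show "card L = k - 1" using brk card_insert unfolding eq by simp
qed

lemma glue_split_at:
  assumes "f \<in> extensional I" "t0 \<in> I" "f t0 = k" and "split_at I t0 k f = (L, g, h)"
  shows "glue I t0 k L g h = f"
proof
  fix t
  show "glue I t0 k L g h t = f t"
    using assms extensional_arb[OF assms(1), of t] by (auto simp: glue_def split_at_def)
qed

lemma split_at_parts:
  assumes I: "finite I" "t0 \<in> I" and f: "f \<in> parking_funs I" and "f t0 = k" "1 \<le> k"
    and brk: "card {t\<in>I. f t \<le> k} = k" and split: "split_at I t0 k f = (L, g, h)"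
  shows "L \<subseteq> I - {t0}" "card L = k - 1"
    and "g \<in> parking_funs L" "h \<in> parking_funs (I - insert t0 L)"
proof -
  have L_def: "L = {t\<in>I. f t < k}" and g_def: "g = restrict f L"
    and h_def: "h = restrict (\<lambda>t. f t - k) (I - insert t0 L)"
    using split unfolding split_at_def by auto
  note lower = breakpoint_lower_part[OF I f \<open>f t0 = k\<close> \<open>1 \<le> k\<close> brk, folded L_def]
  show L: "L \<subseteq> I - {t0}" "card L = k - 1" using lower by simp_all
  have f_val: "1 \<le> f t \<and> f t \<le> card I" if "t \<in> I" for t using parking_funs_bounds[OF f that] .
  have "f \<in> extensional I" using f unfolding parking_funs_def by (simp add: PiE_def)
  then have f_glue: "f = glue I t0 k L g h" using glue_split_at I(2) \<open>f t0 = k\<close> split by metis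
  have "\<forall>t\<in>L. g t < k" unfolding g_def L_def by simp
  note count = card_glue_le[OF I L \<open>1 \<le> k\<close> this, of h, folded f_glue]
  have "k \<le> card I" using f_val[OF I(2)] \<open>f t0 = k\<close> by simp
  have "f t \<in> {1..card L}" if "t \<in> L" for t using f_val[of t] that L(2) unfolding L_def by auto
  then have "g \<in> L \<rightarrow>\<^sub>E {1..card L}" unfolding g_def restrict_PiE_iff by blast
  moreover have "i \<le> card {t\<in>L. g t \<le> i}" if "i \<in> {1..card L}" for i
  proof -
    have "i < k" "i \<le> card I" using that L \<open>k \<le> card I\<close> by auto
    then show ?thesis using parking_funs_le_card[OF f, of i] count[of i] that by simp
  qed
  ultimately show "g \<in> parking_funs L" unfolding parking_funs_def parking_def by blast
  have card_R: "card (I - insert t0 L) = card I - k"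
    using card_Diff_insert_subset(2)[OF I L \<open>1 \<le> k\<close>] .
  have "f t - k \<in> {1..card (I - insert t0 L)}" if "t \<in> I - insert t0 L" for t
  proof -
    have "t \<notin> {t\<in>I. f t \<le> k}" using that lower(3) by simp
    then have "k < f t" using that by simp
    then show ?thesis using f_val[of t] that card_R by auto
  qed
  then have "h \<in> (I - insert t0 L) \<rightarrow>\<^sub>E {1..card (I - insert t0 L)}"
    unfolding h_def restrict_PiE_iff by blast
  moreover have "i \<le> card {t\<in>I - insert t0 L. h t \<le> i}" if "i \<in> {1..card (I - insert t0 L)}" for i
  proof -
    have "i + k \<le> card I" using that card_R \<open>k \<le> card I\<close> by auto
    then have "i + k \<le> card {t\<in>I. f t \<le> i + k}"
      using parking_funs_le_card[OF f, of "i + k"] \<open>1 \<le> k\<close> by simp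
    then show ?thesis using count[of "i + k"] by simp
  qed
  ultimately show "h \<in> parking_funs (I - insert t0 L)" unfolding parking_funs_def parking_def by blast
qed


lemma bij_betw_glue:
  assumes I: "finite I" "t0 \<in> I" and k: "1 \<le> k" "k \<le> card I"
  shows "bij_betw (\<lambda>(L, g, h). glue I t0 k L g h)
    (SIGMA L:{L. L \<subseteq> I - {t0} \<and> card L = k - 1}. parking_funs L \<times> parking_funs (I - insert t0 L))
    {f\<in>parking_funs I. f t0 = k \<and> card {t\<in>I. f t \<le> k} = k}"
    (is "bij_betw _ ?S ?D")
proof (rule bij_betw_byWitness[where f'="split_at I t0 k"])
  have S_iff: "(L, g, h) \<in> ?S \<longleftrightarrow> L \<subseteq> I - {t0} \<and> card L = k - 1
      \<and> g \<in> parking_funs L \<and> h \<in> parking_funs (I - insert t0 L)" for L g h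
    by simp
  show "\<forall>a\<in>?S. split_at I t0 k (case a of (L, g, h) \<Rightarrow> glue I t0 k L g h) = a"
    using split_at_glue k(1) by (auto simp: S_iff)
  show "(\<lambda>(L, g, h). glue I t0 k L g h) ` ?S \<subseteq> ?D"
  proof (rule image_subsetI)
    fix a assume "a \<in> ?S"
    moreover obtain L g h where a: "a = (L, g, h)" by (cases a)
    ultimately have L: "L \<subseteq> I - {t0}" "card L = k - 1"
      and g: "g \<in> parking_funs L" and h: "h \<in> parking_funs (I - insert t0 L)" by (simp_all add: S_iff)
    have "glue I t0 k L g h t0 = k" using I(2) by (simp add: glue_def)
    then show "(case a of (L, g, h) \<Rightarrow> glue I t0 k L g h) \<in> ?D"
      using glue_in_parking_funs[OF I k L g h] card_glue_le_eq[OF I k(1) L g h] a by simp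
  qed
  show "\<forall>f\<in>?D. (case split_at I t0 k f of (L, g, h) \<Rightarrow> glue I t0 k L g h) = f"
  proof
    fix f assume "f \<in> ?D"
    then have "f \<in> extensional I" "f t0 = k" unfolding parking_funs_def by (auto simp: PiE_def)
    then show "(case split_at I t0 k f of (L, g, h) \<Rightarrow> glue I t0 k L g h) = f"
      using glue_split_at[OF _ I(2)] by (simp split: prod.split)
  qed
  show "split_at I t0 k ` ?D \<subseteq> ?S"
  proof (rule image_subsetI)
    fix f assume "f \<in> ?D"
    then have f: "f \<in> parking_funs I" "f t0 = k" "card {t\<in>I. f t \<le> k} = k" by auto
    obtain L g h where split: "split_at I t0 k f = (L, g, h)" by (metis prod.exhaust)
    then show "split_at I t0 k f \<in> ?S" using split_at_parts[OF I f(1,2) k(1) f(3) split] by (simp add: S_iff)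
  qed
qed

definition breakpoint_count :: "nat \<Rightarrow> nat \<Rightarrow> nat" where
  "breakpoint_count n k = ((n - 1) choose (k - 1)) * (k ^ (k - 2) * Suc (n - k) ^ (n - k - 1))"

lemma card_breakpoint:
  assumes I: "finite I" "t0 \<in> I" and k: "1 \<le> k" "k \<le> card I"
  shows "card {f\<in>parking_funs I. f t0 = k \<and> card {t\<in>I. f t \<le> k} = k} = breakpoint_count (card I) k"
proof -
  define Ls where "Ls = {L. L \<subseteq> I - {t0} \<and> card L = k - 1}"
  have "card {f\<in>parking_funs I. f t0 = k \<and> card {t\<in>I. f t \<le> k} = k}
      = card (SIGMA L:Ls. parking_funs L \<times> parking_funs (I - insert t0 L))"
    using bij_betw_glue[OF I k] unfolding Ls_def by (simp add: bij_betw_same_card)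
  also have "\<dots> = (\<Sum>L\<in>Ls. card (parking_funs L \<times> parking_funs (I - insert t0 L)))"
  proof -
    have "finite Ls" unfolding Ls_def using I by (auto intro: finite_subset[of _ "Pow I"])
    moreover have "finite L" if "L \<in> Ls" for L using that I finite_subset unfolding Ls_def by blast
    ultimately show ?thesis using I by (simp add: card_SigmaI finite_parking_funs)
  qed
  also have "\<dots> = (\<Sum>L\<in>Ls. k ^ (k - 2) * Suc (card I - k) ^ (card I - k - 1))"
  proof (rule sum.cong)
    fix L assume "L \<in> Ls"
    then have L: "L \<subseteq> I - {t0}" "card L = k - 1" unfolding Ls_def by auto
    then have "finite L" using I finite_subset by blast
    have "card (parking_funs L) = k ^ (k - 2)"
      using card_parking_funs[OF \<open>finite L\<close>] L(2) k(1) by (simp add: numeral_2_eq_2)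
    moreover have "card (parking_funs (I - insert t0 L)) = Suc (card I - k) ^ (card I - k - 1)"
      using card_parking_funs[of "I - insert t0 L"] card_Diff_insert_subset(2)[OF I L k(1)] I(1) by simp
    ultimately show "card (parking_funs L \<times> parking_funs (I - insert t0 L))
        = k ^ (k - 2) * Suc (card I - k) ^ (card I - k - 1)"
      by (simp add: card_cartesian_product)
  qed simp
  also have "\<dots> = breakpoint_count (card I) k"
    unfolding Ls_def breakpoint_count_def using n_subsets[of "I - {t0}" "k - 1"] I by simp
  finally show ?thesis .
qed

subsection \<open>Raising the value at a fixed point\<close>

lemma le_set_fun_upd_Suc:
  assumes "t0 \<in> I" "f t0 = k"
  shows "{t\<in>I. (f(t0 := Suc k)) t \<le> i} = (if i = k then {t\<in>I. f t \<le> k} - {t0} else {t\<in>I. f t \<le> i})"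
  using assms by auto

lemma raise_in_parking_funs:
  assumes I: "finite I" "t0 \<in> I" and f: "f \<in> parking_funs I" "f t0 = k"
    and no_brk: "card {t\<in>I. f t \<le> k} \<noteq> k"
  shows "f(t0 := Suc k) \<in> parking_funs I"
proof -
  have k: "1 \<le> k" "k \<le> card I" using parking_funs_bounds[OF f(1) I(2)] f(2) by auto
  have "k < card {t\<in>I. f t \<le> k}" using parking_funs_le_card[OF f(1) k] no_brk by simp
  moreover have "card {t\<in>I. f t \<le> k} \<le> card I" using I by (intro card_mono) auto
  moreover have "card ({t\<in>I. f t \<le> k} - {t0}) = card {t\<in>I. f t \<le> k} - 1"
    using I f(2) by simp
  ultimately have "Suc k \<le> card I" and card_k: "k \<le> card ({t\<in>I. f t \<le> k} - {t0})" by simp_all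
  have "f(t0 := Suc k) \<in> I \<rightarrow>\<^sub>E {1..card I}"
    using PiE_fun_upd[of "Suc k" "\<lambda>_. {1..card I}" t0 f I] f(1) I(2) \<open>Suc k \<le> card I\<close>
    unfolding parking_funs_def by (simp add: insert_absorb)
  moreover have "i \<le> card {t\<in>I. (f(t0 := Suc k)) t \<le> i}" if "i \<in> {1..card I}" for i
    using parking_funs_le_card[OF f(1), of i] that card_k
    unfolding le_set_fun_upd_Suc[where f = f, OF I(2) f(2)] by auto
  ultimately show ?thesis unfolding parking_funs_def parking_def by blast
qed

lemma lower_in_parking_funs:
  assumes I: "finite I" "t0 \<in> I" and f: "f \<in> parking_funs I" "f t0 = Suc k" and "1 \<le> k"
  shows "f(t0 := k) \<in> parking_funs I" and "card {t\<in>I. (f(t0 := k)) t \<le> k} \<noteq> k"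
proof -
  define g where "g = f(t0 := k)"
  have "g t0 = k" and f_eq: "f = g(t0 := Suc k)" using f(2) by (auto simp: g_def)
  note sets = le_set_fun_upd_Suc[where f = g, OF I(2) \<open>g t0 = k\<close>, folded f_eq]
  have "Suc k \<le> card I" using parking_funs_bounds[OF f(1) I(2)] f(2) by simp
  have "card {t\<in>I. f t \<le> k} = card {t\<in>I. g t \<le> k} - 1"
    using sets[of k] I \<open>g t0 = k\<close> by simp
  moreover have "k \<le> card {t\<in>I. f t \<le> k}"
    using parking_funs_le_card[OF f(1), of k] \<open>1 \<le> k\<close> \<open>Suc k \<le> card I\<close> by simp
  ultimately have card_g: "Suc k \<le> card {t\<in>I. g t \<le> k}" using \<open>1 \<le> k\<close> by linarith
  then show "card {t\<in>I. g t \<le> k} \<noteq> k" by simp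
  have "g \<in> I \<rightarrow>\<^sub>E {1..card I}"
    using PiE_fun_upd[of k "\<lambda>_. {1..card I}" t0 f I] f(1) I(2) \<open>1 \<le> k\<close> \<open>Suc k \<le> card I\<close>
    unfolding parking_funs_def g_def by (simp add: insert_absorb)
  moreover have "i \<le> card {t\<in>I. g t \<le> i}" if "i \<in> {1..card I}" for i
  proof (cases "i = k")
    case False
    then show ?thesis using parking_funs_le_card[OF f(1), of i] that sets[of i] by simp
  qed (use card_g in simp)
  ultimately show "g \<in> parking_funs I" unfolding parking_funs_def parking_def by blast
qed

lemma card_parking_funs_value_step:
  assumes I: "finite I" "t0 \<in> I" and "1 \<le> k"
  shows "card {f\<in>parking_funs I. f t0 = k} = card {f\<in>parking_funs I. f t0 = k \<and> card {t\<in>I. f t \<le> k} = k}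
           + card {f\<in>parking_funs I. f t0 = Suc k}"
proof -
  define B where "B = {f\<in>parking_funs I. f t0 = k \<and> card {t\<in>I. f t \<le> k} = k}"
  define N where "N = {f\<in>parking_funs I. f t0 = k \<and> card {t\<in>I. f t \<le> k} \<noteq> k}"
  have "card (B \<union> N) = card B + card N"
    using finite_parking_funs[OF I(1)] by (intro card_Un_disjoint) (auto simp: B_def N_def)
  moreover have "{f\<in>parking_funs I. f t0 = k} = B \<union> N" unfolding B_def N_def by auto
  moreover have "bij_betw (\<lambda>f. f(t0 := Suc k)) N {f\<in>parking_funs I. f t0 = Suc k}"
  proof (rule bij_betw_byWitness[where f'="\<lambda>f. f(t0 := k)"])
    show "\<forall>f\<in>N. f(t0 := Suc k, t0 := k) = f" unfolding N_def by auto
    show "\<forall>f\<in>{f\<in>parking_funs I. f t0 = Suc k}. f(t0 := k, t0 := Suc k) = f" by auto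
    show "(\<lambda>f. f(t0 := Suc k)) ` N \<subseteq> {f\<in>parking_funs I. f t0 = Suc k}"
    proof (rule image_subsetI)
      fix f assume "f \<in> N"
      then have "f \<in> parking_funs I" "f t0 = k" "card {t\<in>I. f t \<le> k} \<noteq> k" unfolding N_def by simp_all
      then show "f(t0 := Suc k) \<in> {f\<in>parking_funs I. f t0 = Suc k}"
        using raise_in_parking_funs[OF I] by simp
    qed
    show "(\<lambda>f. f(t0 := k)) ` {f\<in>parking_funs I. f t0 = Suc k} \<subseteq> N"
    proof (rule image_subsetI)
      fix f assume "f \<in> {f\<in>parking_funs I. f t0 = Suc k}"
      then have "f \<in> parking_funs I" "f t0 = Suc k" by simp_all
      then show "f(t0 := k) \<in> N" unfolding N_def using lower_in_parking_funs[OF I _ _ \<open>1 \<le> k\<close>] by simp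
    qed
  qed
  ultimately show ?thesis unfolding B_def by (simp add: bij_betw_same_card)
qed

lemma card_parking_funs_value:
  assumes I: "finite I" "t0 \<in> I" and k: "1 \<le> k" "k \<le> Suc (card I)"
  shows "card {f\<in>parking_funs I. f t0 = k} = (\<Sum>m=k..card I. breakpoint_count (card I) m)"
  using k(2) k(1)
proof (induction k rule: inc_induct)
  case base
  have "{f\<in>parking_funs I. f t0 = Suc (card I)} = {}" using parking_funs_bounds[OF _ I(2)] by force
  then have "card {f\<in>parking_funs I. f t0 = Suc (card I)} = 0" by (simp only: card.empty)
  then show ?case by simp
next
  case (step k)
  then have "1 \<le> k" "k \<le> card I" by simp_all
  then have "card {f\<in>parking_funs I. f t0 = k}
      = breakpoint_count (card I) k + (\<Sum>m=Suc k..card I. breakpoint_count (card I) m)"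
    using card_parking_funs_value_step[OF I \<open>1 \<le> k\<close>] card_breakpoint[OF I] step.IH by simp
  also have "\<dots> = (\<Sum>m=k..card I. breakpoint_count (card I) m)"
    using step by (simp add: sum.atLeast_Suc_atMost)
  finally show ?case .
qed

lemma parking_functions_eq_image:
  "parking_functions n = (\<lambda>f. map f [0..<n]) ` parking_funs {0..<n}"
proof -
  have le_set: "{t. t < n \<and> map f [0..<n] ! t \<le> i} = {t\<in>{0..<n}. f t \<le> i}" for f :: "nat \<Rightarrow> nat" and i
    by auto
  show ?thesis
  proof (intro set_eqI iffI)
    fix xs assume xs: "xs \<in> parking_functions n"
    define f where "f = restrict (\<lambda>t. xs ! t) {0..<n}"
    have "length xs = n" using xs unfolding parking_functions_def by simp
    then have "xs = map f [0..<n]" by (intro nth_equalityI) (auto simp: f_def)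
    moreover have "f \<in> parking_funs {0..<n}"
      using xs le_set[of f] unfolding \<open>xs = map f [0..<n]\<close>
      unfolding parking_functions_def parking_funs_def parking_def by (auto simp: f_def)
    ultimately show "xs \<in> (\<lambda>f. map f [0..<n]) ` parking_funs {0..<n}" by blast
  next
    fix xs assume "xs \<in> (\<lambda>f. map f [0..<n]) ` parking_funs {0..<n}"
    then obtain f where f: "f \<in> parking_funs {0..<n}" and xs: "xs = map f [0..<n]" by blast
    then show "xs \<in> parking_functions n"
      using le_set[of f] parking_funs_bounds[OF f]
      unfolding parking_functions_def parking_funs_def parking_def by auto
  qed
qed

lemma card_parking_functions_first:
  assumes "1 \<le> n"
  shows "card {xs \<in> parking_functions n. xs ! 0 = k} = card {f\<in>parking_funs {0..<n}. f 0 = k}"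
proof -
  have "inj_on (\<lambda>f. map f [0..<n]) (parking_funs {0..<n})"
  proof (rule inj_onI)
    fix f g assume "f \<in> parking_funs {0..<n}" "g \<in> parking_funs {0..<n}"
      and "map f [0..<n] = map g [0..<n]"
    then have "f \<in> extensional {0..<n}" "g \<in> extensional {0..<n}" "\<forall>t\<in>{0..<n}. f t = g t"
      unfolding parking_funs_def by (auto simp: PiE_def map_eq_conv)
    then show "f = g" by (intro extensionalityI) auto
  qed
  moreover have "{xs \<in> parking_functions n. xs ! 0 = k}
      = (\<lambda>f. map f [0..<n]) ` {f\<in>parking_funs {0..<n}. f 0 = k}"
  proof -
    have "map f [0..<n] ! 0 = f 0" for f :: "nat \<Rightarrow> nat" using assms by simp
    then show ?thesis unfolding parking_functions_eq_image image_def by auto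
  qed
  ultimately show ?thesis by (simp add: card_image inj_on_subset)
qed

lemma Suc_powi_pred: "real (s + 1) powi (int s - 1) = real (Suc s) ^ (s - 1)"
proof (cases s)
  case (Suc m)
  then have "int s - 1 = int m" by simp
  then show ?thesis using Suc by simp
qed simp

lemma powi_minus_two:
  assumes "1 \<le> d"
  shows "real d powi (int d - 2) = real d ^ (d - 2)"
proof (cases "d = 1")
  case False
  then have "int d - 2 = int (d - 2)" using assms by simp
  then show ?thesis by (simp only: power_int_of_nat)
qed simp

lemma breakpoint_count_reflect:
  assumes "s < n"
  shows "real (breakpoint_count n (n - s)) =
    real ((n-1) choose s) * real (s+1) powi (int s - 1) * real (n-s) powi (int n - int s - 2)"
proof -
  obtain m where n: "n = Suc (s + m)" using less_imp_Suc_add[OF assms] by blast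
  have n_diff: "n - 1 = s + m" "n - s = Suc m" "int n - int s - 2 = int (Suc m) - 2"
    unfolding n by simp_all
  have "(s + m) choose m = (s + m) choose s" using binomial_symmetric[of s "s + m"] by simp
  then have count: "breakpoint_count n (Suc m) = ((s + m) choose s) * (Suc m ^ (Suc m - 2) * Suc s ^ (s - 1))"
    unfolding breakpoint_count_def n by simp
  have "real (Suc m) powi (int (Suc m) - 2) = real (Suc m) ^ (Suc m - 2)" by (rule powi_minus_two) simp
  then show ?thesis
    by (simp only: count n_diff Suc_powi_pred of_nat_mult of_nat_power mult_ac)
qed

theorem corollary1:
  fixes n k :: nat
  assumes "1 \<le> n" and "1 \<le> k" and "k \<le> n"
  shows "real (card {xs \<in> parking_functions n. xs ! 0 = k}) =
    (\<Sum>s=0..n-k. real ((n-1) choose s) * real (s+1) powi (int s - 1)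
                  * real (n-s) powi (int n - int s - 2))"
proof -
  have "card {xs \<in> parking_functions n. xs ! 0 = k} = card {f\<in>parking_funs {0..<n}. f 0 = k}"
    by (rule card_parking_functions_first[OF assms(1)])
  also have "\<dots> = (\<Sum>m=k..n. breakpoint_count n m)"
    using card_parking_funs_value[of "{0..<n}" 0 k] assms by simp
  also have "\<dots> = (\<Sum>s=0..n-k. breakpoint_count n (n - s))"
    by (rule sum.reindex_bij_witness[where i="\<lambda>s. n - s" and j="\<lambda>m. n - m"]) (use assms in auto)
  finally have "real (card {xs \<in> parking_functions n. xs ! 0 = k})
      = (\<Sum>s=0..n-k. real (breakpoint_count n (n - s)))" by simp
  also have "\<dots> = (\<Sum>s=0..n-k. real ((n-1) choose s) * real (s+1) powi (int s - 1)
                  * real (n-s) powi (int n - int s - 2))"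
    using assms by (intro sum.cong refl breakpoint_count_reflect) auto
  finally show ?thesis .
qed

end
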